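(* Let $(A,\varphi,\phi_A,[\cdot,\cdot]_A,a_A,K,\langle\cdot,\cdot\rangle)$ be a para-Kähler hom-Lie algebroid with hom-Levi-Civita connection $\nabla$, and identify $A^{-1}$ with $(A^1)^*$ via $\langle\cdot,\cdot\rangle$ (so $\phi_{A^{-1}}$ corresponds to $\phi_{(A^1)^*}:=(\phi_{A^1})^\dagger$). Then: (i) $X\mapsto\nabla_X|_{\Gamma(A^1)}$, $X\in\Gamma(A^1)$, is a representation of the hom-Lie algebroid $A^1$ on $(A^1,\varphi,\phi_{A^1})$ with respect to $\phi_{A^1}$; (ii) $\alpha\mapsto\nabla_\alpha|_{\Gamma((A^1)^* )}$, $\alpha\in\Gamma((A^1)^* )\cong\Gamma(A^{-1})$, is a representation of the hom-Lie algebroid $(A^1)^*\cong A^{-1}$ on $((A^1)^*,\varphi,\phi_{(A^1)^*})$ with respect to $\phi_{(A^1)^*}$.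
   Context: Standing conventions. $M$ is a smooth manifold, $\varphi:M\to M$ a diffeomorphism, $\varphi^*f=f\circ\varphi$. A hom-bundle $(A\to M,\varphi,\phi_A)$ is a vector bundle $A\to M$ together with an invertible $\mathbb R$-linear map $\phi_A:\Gamma(A)\to\Gamma(A)$ with $\phi_A(fX)=\varphi^*(f)\phi_A(X)$. $\varphi^!TM$ is the pullback bundle; its sections are identified with $\mathbb R$-linear maps $D:C^\infty(M)\to C^\infty(M)$ with $D(fg)=D(f)\varphi^*(g)+\varphi^*(f)D(g)$. A hom-Lie algebroid $(A,\varphi,\phi_A,[\cdot,\cdot]_A,a_A)$ consists of a hom-bundle, a skew-symmetric $\mathbb R$-bilinear bracket on $\Gamma(A)$ with $\phi_A[X,Y]_A=[\phi_A X,\phi_A Y]_A$ and $[\phi_A(X),[Y,Z]_A]_A+[\phi_A(Y),[Z,X]_A]_A+[\phi_A(Z),[X,Y]_A]_A=0$, and a bundle map $a_A:A\to\varphi^!TM$ such that $[X,fY]_A=\varphi^*(f)[X,Y]_A+a_A(\phi_A(X))(f)\phi_A(Y)$, $\varphi^*\circ a_A(X)=a_A(\phi_A(X))\circ\varphi^*$, and $a_A([X,Y]_A)\circ\varphi^*=a_A(\phi_AX)\circ a_A(Y)-a_A(\phi_AY)\circ a_A(X)$. For a hom-bundle $(E,\varphi,\phi_E)$, $\phi_E^\dagger$ on $\Gamma(E^* )$ is $\langle\phi_E^\dagger\xi,e\rangle=\varphi^*\langle\xi,\phi_E^{-1}e\rangle$. Pseudo-Riemannian metric: a symmetric nondegenerate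 bilinear form $\langle\cdot,\cdot\rangle$ on $A$ with $\langle\phi_AX,\phi_AY\rangle=\varphi^*\langle X,Y\rangle$. The hom-Levi-Civita connection is the unique $\mathbb R$-bilinear $\nabla:\Gamma(A)\times\Gamma(A)\to\Gamma(A)$ with $\nabla_{fX}Y=\varphi^*(f)\nabla_XY$, $\nabla_X(fY)=\varphi^*(f)\nabla_XY+a_A(\phi_AX)(f)\phi_A(Y)$, $[X,Y]_A=\nabla_XY-\nabla_YX$, and $a_A(\phi_AX)\langle Y,Z\rangle=\langle\nabla_XY,\phi_AZ\rangle+\langle\phi_AY,\nabla_XZ\rangle$. An almost para-complex structure is an invertible map $K:\Gamma(A)\to\Gamma(A)$ with $(\phi_A\circ K)^2=\mathrm{Id}$, $\phi_A\circ K=K\circ\phi_A$, and such that $A^1=\ker(\phi_A\circ K-\mathrm{Id})$ and $A^{-1}=\ker(\phi_A\circ K+\mathrm{Id})$ have the same rank. $(K,\langle\cdot,\cdot\rangle)$ is almost para-Hermitian if $\langle(\phi_A\circ K)X,(\phi_A\circ K)Y\rangle=-\langle X,Y\rangle$. A para-Kähler hom-Lie algebroid is an almost para-Hermitian hom-Lie algebroid with $\nabla_X\phi_A(KY)=\phi_A(K(\nabla_XY))$ for all $X,Y$. In this situation $A^1$ and $A^{-1}$ are $\phi_A$-invariant, closed under $[\cdot,\cdot]_A$ and $\nabla$, and are hom-Lie algebroids with the restricted structures; $A^{-1}\to(A^1)^*$, $\bar X\mapsto\langle\bar X,\cdot\rangle|_{A^1}$ is an isomorphism. Representation: given a hom-Lie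 algebroid $B$, a hom-bundle $(E,\varphi,\phi_E)$ and invertible $\mu:\Gamma(E)\to\Gamma(E)$ with $\mu(fe)=\varphi^*(f)\mu(e)$, a representation of $B$ on $E$ w.r.t. $\mu$ is an assignment $X\mapsto\rho(X)$ of $\mathbb R$-linear maps $\Gamma(E)\to\Gamma(E)$, with $\rho(fX)=\varphi^*(f)\rho(X)$, such that $\rho(X)(fe)=\varphi^*(f)\rho(X)e+a_B(\phi_B(X))(f)\mu(e)$, $\rho(\phi_B(X))\circ\mu=\mu\circ\rho(X)$, and $\rho([X,Y]_B)\circ\mu=\rho(\phi_B(X))\circ\rho(Y)-\rho(\phi_B(Y))\circ\rho(X)$. *)

theory Defs
  imports "HOL-Analysis.Analysis"
begin

text \<open>Points of M form a type 'm; C^infty(M) is modelled by a set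
  C of real functions on M; sections of a vector bundle are functions
  'm => 'v into a finite-dimensional real vector space 'v (ambient space containing
  all fibres); Gamma(A) is a set of such functions.\<close>

definition pb :: "('m \<Rightarrow> 'm) \<Rightarrow> ('m \<Rightarrow> real) \<Rightarrow> ('m \<Rightarrow> real)" where
  "pb \<phi> f = f \<circ> \<phi>"

definition ssm :: "('m \<Rightarrow> real) \<Rightarrow> ('m \<Rightarrow> 'v::real_vector) \<Rightarrow> ('m \<Rightarrow> 'v)" where
  "ssm f X = (\<lambda>x. f x *\<^sub>R X x)"

definition sadd :: "('m \<Rightarrow> 'v::real_vector) \<Rightarrow> ('m \<Rightarrow> 'v) \<Rightarrow> ('m \<Rightarrow> 'v)" where
  "sadd X Y = (\<lambda>x. X x + Y x)"

definition sneg :: "('m \<Rightarrow> 'v::real_vector) \<Rightarrow> ('m \<Rightarrow> 'v)" where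
  "sneg X = (\<lambda>x. - X x)"

definition szero :: "'m \<Rightarrow> 'v::real_vector" where
  "szero = (\<lambda>x. 0)"

definition fib :: "('m \<Rightarrow> 'v) set \<Rightarrow> 'm \<Rightarrow> 'v set" where
  "fib \<Gamma> x = (\<lambda>X. X x) ` \<Gamma>"

text \<open>C plays the role of C^infty(M), phi is a diffeomorphism: phi^* and (phi^-1)^* preserve C.\<close>
definition smooth_setting :: "('m \<Rightarrow> real) set \<Rightarrow> ('m \<Rightarrow> 'm) \<Rightarrow> bool" where
  "smooth_setting C \<phi> \<longleftrightarrow>
     (\<forall>c. (\<lambda>_. c) \<in> C) \<and>
     (\<forall>f\<in>C. \<forall>g\<in>C. (\<lambda>x. f x + g x) \<in> C \<and> (\<lambda>x. f x * g x) \<in> C) \<and>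
     (\<forall>f\<in>C. (\<lambda>x. - f x) \<in> C) \<and>
     bij \<phi> \<and> (\<forall>f\<in>C. pb \<phi> f \<in> C \<and> pb (inv \<phi>) f \<in> C)"

definition vbundle :: "('m \<Rightarrow> real) set \<Rightarrow> ('m \<Rightarrow> 'v::euclidean_space) set \<Rightarrow> bool" where
  "vbundle C \<Gamma> \<longleftrightarrow> szero \<in> \<Gamma> \<and> (\<forall>X\<in>\<Gamma>. \<forall>Y\<in>\<Gamma>. sadd X Y \<in> \<Gamma>) \<and>
     (\<forall>f\<in>C. \<forall>X\<in>\<Gamma>. ssm f X \<in> \<Gamma>)"

definition hom_bundle ::
  "('m \<Rightarrow> real) set \<Rightarrow> ('m \<Rightarrow> 'm) \<Rightarrow> ('m \<Rightarrow> 'v::euclidean_space) set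
   \<Rightarrow> (('m \<Rightarrow> 'v) \<Rightarrow> ('m \<Rightarrow> 'v)) \<Rightarrow> bool" where
  "hom_bundle C \<phi> \<Gamma> \<Phi> \<longleftrightarrow> vbundle C \<Gamma> \<and> bij_betw \<Phi> \<Gamma> \<Gamma> \<and>
     (\<forall>X\<in>\<Gamma>. \<forall>Y\<in>\<Gamma>. \<Phi> (sadd X Y) = sadd (\<Phi> X) (\<Phi> Y)) \<and>
     (\<forall>f\<in>C. \<forall>X\<in>\<Gamma>. \<Phi> (ssm f X) = ssm (pb \<phi> f) (\<Phi> X))"

text \<open>Sections of phi^! TM: R-linear maps D on C^infty(M) with
  D(fg) = D(f) phi^*(g) + phi^*(f) D(g).\<close>
definition phi_derivation ::
  "('m \<Rightarrow> real) set \<Rightarrow> ('m \<Rightarrow> 'm) \<Rightarrow> (('m \<Rightarrow> real) \<Rightarrow> ('m \<Rightarrow> real)) \<Rightarrow> bool" where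
  "phi_derivation C \<phi> D \<longleftrightarrow>
     (\<forall>f\<in>C. D f \<in> C) \<and>
     (\<forall>f\<in>C. \<forall>g\<in>C. D (\<lambda>x. f x + g x) = (\<lambda>x. D f x + D g x)) \<and>
     (\<forall>c. \<forall>f\<in>C. D (\<lambda>x. c * f x) = (\<lambda>x. c * D f x)) \<and>
     (\<forall>f\<in>C. \<forall>g\<in>C. D (\<lambda>x. f x * g x) = (\<lambda>x. D f x * pb \<phi> g x + pb \<phi> f x * D g x))"

definition hom_Lie_algebroid ::
  "('m \<Rightarrow> real) set \<Rightarrow> ('m \<Rightarrow> 'm) \<Rightarrow> ('m \<Rightarrow> 'v::euclidean_space) set
   \<Rightarrow> (('m \<Rightarrow> 'v) \<Rightarrow> ('m \<Rightarrow> 'v))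
   \<Rightarrow> (('m \<Rightarrow> 'v) \<Rightarrow> ('m \<Rightarrow> 'v) \<Rightarrow> ('m \<Rightarrow> 'v))
   \<Rightarrow> (('m \<Rightarrow> 'v) \<Rightarrow> ('m \<Rightarrow> real) \<Rightarrow> ('m \<Rightarrow> real)) \<Rightarrow> bool" where
  "hom_Lie_algebroid C \<phi> \<Gamma> \<Phi> br a \<longleftrightarrow>
     hom_bundle C \<phi> \<Gamma> \<Phi> \<and>
     (\<forall>X\<in>\<Gamma>. \<forall>Y\<in>\<Gamma>. br X Y \<in> \<Gamma>) \<and>
     (\<forall>X\<in>\<Gamma>. \<forall>Y\<in>\<Gamma>. br X Y = sneg (br Y X)) \<and>
     (\<forall>X\<in>\<Gamma>. \<forall>Y\<in>\<Gamma>. \<forall>Z\<in>\<Gamma>. br (sadd X Y) Z = sadd (br X Z) (br Y Z)) \<and>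
     (\<forall>X\<in>\<Gamma>. \<forall>Y\<in>\<Gamma>. \<forall>Z\<in>\<Gamma>. br Z (sadd X Y) = sadd (br Z X) (br Z Y)) \<and>
     (\<forall>c. \<forall>X\<in>\<Gamma>. \<forall>Y\<in>\<Gamma>. br (ssm (\<lambda>_. c) X) Y = ssm (\<lambda>_. c) (br X Y)) \<and>
     (\<forall>c. \<forall>X\<in>\<Gamma>. \<forall>Y\<in>\<Gamma>. br X (ssm (\<lambda>_. c) Y) = ssm (\<lambda>_. c) (br X Y)) \<and>
     (\<forall>X\<in>\<Gamma>. \<forall>Y\<in>\<Gamma>. \<Phi> (br X Y) = br (\<Phi> X) (\<Phi> Y)) \<and>
     (\<forall>X\<in>\<Gamma>. \<forall>Y\<in>\<Gamma>. \<forall>Z\<in>\<Gamma>.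
        sadd (sadd (br (\<Phi> X) (br Y Z)) (br (\<Phi> Y) (br Z X))) (br (\<Phi> Z) (br X Y)) = szero) \<and>
     (\<forall>X\<in>\<Gamma>. phi_derivation C \<phi> (a X)) \<and>
     (\<forall>X\<in>\<Gamma>. \<forall>Y\<in>\<Gamma>. \<forall>f\<in>C. a (sadd X Y) f = (\<lambda>x. a X f x + a Y f x)) \<and>
     (\<forall>g\<in>C. \<forall>X\<in>\<Gamma>. \<forall>f\<in>C. a (ssm g X) f = (\<lambda>x. g x * a X f x)) \<and>
     (\<forall>X\<in>\<Gamma>. \<forall>Y\<in>\<Gamma>. \<forall>f\<in>C.
        br X (ssm f Y) = sadd (ssm (pb \<phi> f) (br X Y)) (ssm (a (\<Phi> X) f) (\<Phi> Y))) \<and>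
     (\<forall>X\<in>\<Gamma>. \<forall>f\<in>C. pb \<phi> (a X f) = a (\<Phi> X) (pb \<phi> f)) \<and>
     (\<forall>X\<in>\<Gamma>. \<forall>Y\<in>\<Gamma>. \<forall>f\<in>C.
        a (br X Y) (pb \<phi> f) = (\<lambda>x. a (\<Phi> X) (a Y f) x - a (\<Phi> Y) (a X f) x))"

definition ipr :: "('m \<Rightarrow> 'v \<Rightarrow> 'v \<Rightarrow> real) \<Rightarrow> ('m \<Rightarrow> 'v) \<Rightarrow> ('m \<Rightarrow> 'v) \<Rightarrow> ('m \<Rightarrow> real)" where
  "ipr g X Y = (\<lambda>x. g x (X x) (Y x))"

definition pseudo_metric ::
  "('m \<Rightarrow> real) set \<Rightarrow> ('m \<Rightarrow> 'm) \<Rightarrow> ('m \<Rightarrow> 'v::euclidean_space) set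
   \<Rightarrow> (('m \<Rightarrow> 'v) \<Rightarrow> ('m \<Rightarrow> 'v)) \<Rightarrow> ('m \<Rightarrow> 'v \<Rightarrow> 'v \<Rightarrow> real) \<Rightarrow> bool" where
  "pseudo_metric C \<phi> \<Gamma> \<Phi> g \<longleftrightarrow>
     (\<forall>x. bilinear (g x)) \<and>
     (\<forall>x. \<forall>u\<in>fib \<Gamma> x. \<forall>w\<in>fib \<Gamma> x. g x u w = g x w u) \<and>
     (\<forall>x. \<forall>u\<in>fib \<Gamma> x. (\<forall>w\<in>fib \<Gamma> x. g x u w = 0) \<longrightarrow> u = 0) \<and>
     (\<forall>X\<in>\<Gamma>. \<forall>Y\<in>\<Gamma>. ipr g X Y \<in> C) \<and>
     (\<forall>X\<in>\<Gamma>. \<forall>Y\<in>\<Gamma>. ipr g (\<Phi> X) (\<Phi> Y) = pb \<phi> (ipr g X Y))"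

definition hom_LC_connection ::
  "('m \<Rightarrow> real) set \<Rightarrow> ('m \<Rightarrow> 'm) \<Rightarrow> ('m \<Rightarrow> 'v::euclidean_space) set
   \<Rightarrow> (('m \<Rightarrow> 'v) \<Rightarrow> ('m \<Rightarrow> 'v))
   \<Rightarrow> (('m \<Rightarrow> 'v) \<Rightarrow> ('m \<Rightarrow> 'v) \<Rightarrow> ('m \<Rightarrow> 'v))
   \<Rightarrow> (('m \<Rightarrow> 'v) \<Rightarrow> ('m \<Rightarrow> real) \<Rightarrow> ('m \<Rightarrow> real))
   \<Rightarrow> ('m \<Rightarrow> 'v \<Rightarrow> 'v \<Rightarrow> real)
   \<Rightarrow> (('m \<Rightarrow> 'v) \<Rightarrow> ('m \<Rightarrow> 'v) \<Rightarrow> ('m \<Rightarrow> 'v)) \<Rightarrow> bool" where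
  "hom_LC_connection C \<phi> \<Gamma> \<Phi> br a g nab \<longleftrightarrow>
     (\<forall>X\<in>\<Gamma>. \<forall>Y\<in>\<Gamma>. nab X Y \<in> \<Gamma>) \<and>
     (\<forall>X\<in>\<Gamma>. \<forall>Y\<in>\<Gamma>. \<forall>Z\<in>\<Gamma>. nab (sadd X Y) Z = sadd (nab X Z) (nab Y Z)) \<and>
     (\<forall>X\<in>\<Gamma>. \<forall>Y\<in>\<Gamma>. \<forall>Z\<in>\<Gamma>. nab Z (sadd X Y) = sadd (nab Z X) (nab Z Y)) \<and>
     (\<forall>c. \<forall>X\<in>\<Gamma>. \<forall>Y\<in>\<Gamma>. nab X (ssm (\<lambda>_. c) Y) = ssm (\<lambda>_. c) (nab X Y)) \<and>
     (\<forall>f\<in>C. \<forall>X\<in>\<Gamma>. \<forall>Y\<in>\<Gamma>. nab (ssm f X) Y = ssm (pb \<phi> f) (nab X Y)) \<and>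
     (\<forall>f\<in>C. \<forall>X\<in>\<Gamma>. \<forall>Y\<in>\<Gamma>.
        nab X (ssm f Y) = sadd (ssm (pb \<phi> f) (nab X Y)) (ssm (a (\<Phi> X) f) (\<Phi> Y))) \<and>
     (\<forall>X\<in>\<Gamma>. \<forall>Y\<in>\<Gamma>. br X Y = sadd (nab X Y) (sneg (nab Y X))) \<and>
     (\<forall>X\<in>\<Gamma>. \<forall>Y\<in>\<Gamma>. \<forall>Z\<in>\<Gamma>.
        a (\<Phi> X) (ipr g Y Z) = (\<lambda>x. ipr g (nab X Y) (\<Phi> Z) x + ipr g (\<Phi> Y) (nab X Z) x))"

definition eig_plus :: "('m \<Rightarrow> 'v::real_vector) set \<Rightarrow> (('m \<Rightarrow> 'v) \<Rightarrow> ('m \<Rightarrow> 'v))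
   \<Rightarrow> (('m \<Rightarrow> 'v) \<Rightarrow> ('m \<Rightarrow> 'v)) \<Rightarrow> ('m \<Rightarrow> 'v) set" where
  "eig_plus \<Gamma> \<Phi> K = {X \<in> \<Gamma>. \<Phi> (K X) = X}"

definition eig_minus :: "('m \<Rightarrow> 'v::real_vector) set \<Rightarrow> (('m \<Rightarrow> 'v) \<Rightarrow> ('m \<Rightarrow> 'v))
   \<Rightarrow> (('m \<Rightarrow> 'v) \<Rightarrow> ('m \<Rightarrow> 'v)) \<Rightarrow> ('m \<Rightarrow> 'v) set" where
  "eig_minus \<Gamma> \<Phi> K = {X \<in> \<Gamma>. \<Phi> (K X) = sneg X}"

definition almost_para_complex ::
  "('m \<Rightarrow> real) set \<Rightarrow> ('m \<Rightarrow> 'v::euclidean_space) set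
   \<Rightarrow> (('m \<Rightarrow> 'v) \<Rightarrow> ('m \<Rightarrow> 'v)) \<Rightarrow> (('m \<Rightarrow> 'v) \<Rightarrow> ('m \<Rightarrow> 'v)) \<Rightarrow> bool" where
  "almost_para_complex C \<Gamma> \<Phi> K \<longleftrightarrow>
     bij_betw K \<Gamma> \<Gamma> \<and>
     (\<forall>X\<in>\<Gamma>. \<Phi> (K (\<Phi> (K X))) = X) \<and>
     (\<forall>X\<in>\<Gamma>. \<Phi> (K X) = K (\<Phi> X)) \<and>
     (\<forall>X\<in>\<Gamma>. \<forall>Y\<in>\<Gamma>. \<Phi> (K (sadd X Y)) = sadd (\<Phi> (K X)) (\<Phi> (K Y))) \<and>
     (\<forall>f\<in>C. \<forall>X\<in>\<Gamma>. \<Phi> (K (ssm f X)) = ssm f (\<Phi> (K X))) \<and>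
     (\<forall>x. dim (fib (eig_plus \<Gamma> \<Phi> K) x) = dim (fib (eig_minus \<Gamma> \<Phi> K) x))"

definition para_Kaehler ::
  "('m \<Rightarrow> real) set \<Rightarrow> ('m \<Rightarrow> 'm) \<Rightarrow> ('m \<Rightarrow> 'v::euclidean_space) set
   \<Rightarrow> (('m \<Rightarrow> 'v) \<Rightarrow> ('m \<Rightarrow> 'v))
   \<Rightarrow> (('m \<Rightarrow> 'v) \<Rightarrow> ('m \<Rightarrow> 'v) \<Rightarrow> ('m \<Rightarrow> 'v))
   \<Rightarrow> (('m \<Rightarrow> 'v) \<Rightarrow> ('m \<Rightarrow> real) \<Rightarrow> ('m \<Rightarrow> real))
   \<Rightarrow> (('m \<Rightarrow> 'v) \<Rightarrow> ('m \<Rightarrow> 'v))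
   \<Rightarrow> ('m \<Rightarrow> 'v \<Rightarrow> 'v \<Rightarrow> real)
   \<Rightarrow> (('m \<Rightarrow> 'v) \<Rightarrow> ('m \<Rightarrow> 'v) \<Rightarrow> ('m \<Rightarrow> 'v)) \<Rightarrow> bool" where
  "para_Kaehler C \<phi> \<Gamma> \<Phi> br a K g nab \<longleftrightarrow>
     smooth_setting C \<phi> \<and>
     hom_Lie_algebroid C \<phi> \<Gamma> \<Phi> br a \<and>
     pseudo_metric C \<phi> \<Gamma> \<Phi> g \<and>
     hom_LC_connection C \<phi> \<Gamma> \<Phi> br a g nab \<and>
     almost_para_complex C \<Gamma> \<Phi> K \<and>
     (\<forall>X\<in>\<Gamma>. \<forall>Y\<in>\<Gamma>. ipr g (\<Phi> (K X)) (\<Phi> (K Y)) = (\<lambda>x. - ipr g X Y x)) \<and>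
     (\<forall>X\<in>\<Gamma>. \<forall>Y\<in>\<Gamma>. nab X (\<Phi> (K Y)) = \<Phi> (K (nab X Y)))"

definition hom_representation ::
  "('m \<Rightarrow> real) set \<Rightarrow> ('m \<Rightarrow> 'm) \<Rightarrow> ('m \<Rightarrow> 'v::euclidean_space) set
   \<Rightarrow> (('m \<Rightarrow> 'v) \<Rightarrow> ('m \<Rightarrow> 'v))
   \<Rightarrow> (('m \<Rightarrow> 'v) \<Rightarrow> ('m \<Rightarrow> 'v) \<Rightarrow> ('m \<Rightarrow> 'v))
   \<Rightarrow> (('m \<Rightarrow> 'v) \<Rightarrow> ('m \<Rightarrow> real) \<Rightarrow> ('m \<Rightarrow> real))
   \<Rightarrow> ('m \<Rightarrow> 'w::euclidean_space) set \<Rightarrow> (('m \<Rightarrow> 'w) \<Rightarrow> ('m \<Rightarrow> 'w))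
   \<Rightarrow> (('m \<Rightarrow> 'w) \<Rightarrow> ('m \<Rightarrow> 'w))
   \<Rightarrow> (('m \<Rightarrow> 'v) \<Rightarrow> ('m \<Rightarrow> 'w) \<Rightarrow> ('m \<Rightarrow> 'w)) \<Rightarrow> bool" where
  "hom_representation C \<phi> \<Gamma>B \<Phi>B brB aB \<Gamma>E \<Phi>E \<mu> \<rho> \<longleftrightarrow>
     hom_Lie_algebroid C \<phi> \<Gamma>B \<Phi>B brB aB \<and>
     hom_bundle C \<phi> \<Gamma>E \<Phi>E \<and>
     bij_betw \<mu> \<Gamma>E \<Gamma>E \<and>
     (\<forall>e\<in>\<Gamma>E. \<forall>e'\<in>\<Gamma>E. \<mu> (sadd e e') = sadd (\<mu> e) (\<mu> e')) \<and>
     (\<forall>f\<in>C. \<forall>e\<in>\<Gamma>E. \<mu> (ssm f e) = ssm (pb \<phi> f) (\<mu> e)) \<and>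
     (\<forall>X\<in>\<Gamma>B. \<forall>e\<in>\<Gamma>E. \<rho> X e \<in> \<Gamma>E) \<and>
     (\<forall>X\<in>\<Gamma>B. \<forall>e\<in>\<Gamma>E. \<forall>e'\<in>\<Gamma>E. \<rho> X (sadd e e') = sadd (\<rho> X e) (\<rho> X e')) \<and>
     (\<forall>c. \<forall>X\<in>\<Gamma>B. \<forall>e\<in>\<Gamma>E. \<rho> X (ssm (\<lambda>_. c) e) = ssm (\<lambda>_. c) (\<rho> X e)) \<and>
     (\<forall>f\<in>C. \<forall>X\<in>\<Gamma>B. \<forall>e\<in>\<Gamma>E. \<rho> (ssm f X) e = ssm (pb \<phi> f) (\<rho> X e)) \<and>
     (\<forall>f\<in>C. \<forall>X\<in>\<Gamma>B. \<forall>e\<in>\<Gamma>E.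
        \<rho> X (ssm f e) = sadd (ssm (pb \<phi> f) (\<rho> X e)) (ssm (aB (\<Phi>B X) f) (\<mu> e))) \<and>
     (\<forall>X\<in>\<Gamma>B. \<forall>e\<in>\<Gamma>E. \<rho> (\<Phi>B X) (\<mu> e) = \<mu> (\<rho> X e)) \<and>
     (\<forall>X\<in>\<Gamma>B. \<forall>Y\<in>\<Gamma>B. \<forall>e\<in>\<Gamma>E.
        \<rho> (brB X Y) (\<mu> e) = sadd (\<rho> (\<Phi>B X) (\<rho> Y e)) (sneg (\<rho> (\<Phi>B Y) (\<rho> X e))))"

end

theory Submission
  imports Defs
begin

text \<open>The eigenbundles \<open>A\<^sup>1\<close>, \<open>A\<^sup>-\<^sup>1\<close> of \<open>\<phi>\<^sub>A \<circ> K\<close> are preserved by \<open>\<nabla>\<close>, because \<open>\<nabla>\<close> commutes with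
  \<open>\<phi>\<^sub>A \<circ> K\<close>, and they are isotropic, because \<open>\<phi>\<^sub>A \<circ> K\<close> is an anti-isometry. The axioms of a
  representation are then axioms of the connection, except flatness: the hom-curvature
  \<open>R(X,Y)Z\<close> must vanish for \<open>X, Y, Z \<in> A\<^sup>s\<close>. As \<open>R(X,Y)Z \<in> A\<^sup>s\<close>, it pairs to zero with \<open>A\<^sup>s\<close>.
  Against \<open>A\<^sup>-\<^sup>s\<close> the skew-symmetry of \<open>\<langle>R(X,Y)\<cdot>,\<cdot>\<rangle>\<close> and the first Bianchi identity
  rewrite the pairing as pairings between sections of \<open>A\<^sup>s\<close>, which vanish as well; since
  \<open>A = A\<^sup>s \<oplus> A\<^sup>-\<^sup>s\<close>, nondegeneracy gives \<open>R(X,Y)Z = 0\<close>.\<close>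

lemma hom_bundle_subbundle:
  assumes "hom_bundle C \<phi> \<Gamma> \<Phi>" "B \<subseteq> \<Gamma>" "vbundle C B" "bij_betw \<Phi> B B"
  shows "hom_bundle C \<phi> B \<Phi>"
  using assms unfolding hom_bundle_def by blast

lemma hom_Lie_algebroid_subalgebroid:
  assumes "hom_Lie_algebroid C \<phi> \<Gamma> \<Phi> br a" "B \<subseteq> \<Gamma>" "vbundle C B" "bij_betw \<Phi> B B"
    and "\<And>X Y. X \<in> B \<Longrightarrow> Y \<in> B \<Longrightarrow> br X Y \<in> B"
  shows "hom_Lie_algebroid C \<phi> B \<Phi> br a"
proof -
  have "hom_bundle C \<phi> \<Gamma> \<Phi>"
    using assms(1) unfolding hom_Lie_algebroid_def by blast
  then have "hom_bundle C \<phi> B \<Phi>"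
    using assms(2-4) by (rule hom_bundle_subbundle)
  with assms show ?thesis
    unfolding hom_Lie_algebroid_def by (meson subsetD)
qed

locale hom_Levi_Civita =
  fixes C :: "('m \<Rightarrow> real) set" and \<phi> :: "'m \<Rightarrow> 'm"
    and \<Gamma> :: "('m \<Rightarrow> 'v::euclidean_space) set"
    and \<Phi> :: "('m \<Rightarrow> 'v) \<Rightarrow> ('m \<Rightarrow> 'v)"
    and br :: "('m \<Rightarrow> 'v) \<Rightarrow> ('m \<Rightarrow> 'v) \<Rightarrow> ('m \<Rightarrow> 'v)"
    and a :: "('m \<Rightarrow> 'v) \<Rightarrow> ('m \<Rightarrow> real) \<Rightarrow> ('m \<Rightarrow> real)"
    and g :: "'m \<Rightarrow> 'v \<Rightarrow> 'v \<Rightarrow> real"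
    and nab :: "('m \<Rightarrow> 'v) \<Rightarrow> ('m \<Rightarrow> 'v) \<Rightarrow> ('m \<Rightarrow> 'v)"
  assumes smooth: "smooth_setting C \<phi>"
    and algebroid: "hom_Lie_algebroid C \<phi> \<Gamma> \<Phi> br a"
    and metric: "pseudo_metric C \<phi> \<Gamma> \<Phi> g"
    and connection: "hom_LC_connection C \<phi> \<Gamma> \<Phi> br a g nab"
begin

lemma hom_bundle: "hom_bundle C \<phi> \<Gamma> \<Phi>"
  using algebroid unfolding hom_Lie_algebroid_def by blast

lemma
  shows const_in_C: "(\<lambda>_. c) \<in> C"
    and szero_in: "szero \<in> \<Gamma>"
    and sadd_in: "X \<in> \<Gamma> \<Longrightarrow> Y \<in> \<Gamma> \<Longrightarrow> sadd X Y \<in> \<Gamma>"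
    and ssm_in: "f \<in> C \<Longrightarrow> X \<in> \<Gamma> \<Longrightarrow> ssm f X \<in> \<Gamma>"
    and Phi_bij: "bij_betw \<Phi> \<Gamma> \<Gamma>"
    and Phi_sadd: "X \<in> \<Gamma> \<Longrightarrow> Y \<in> \<Gamma> \<Longrightarrow> \<Phi> (sadd X Y) = sadd (\<Phi> X) (\<Phi> Y)"
    and Phi_ssm: "f \<in> C \<Longrightarrow> X \<in> \<Gamma> \<Longrightarrow> \<Phi> (ssm f X) = ssm (pb \<phi> f) (\<Phi> X)"
  using smooth hom_bundle unfolding smooth_setting_def hom_bundle_def vbundle_def by blast+

lemma
  shows br_in: "X \<in> \<Gamma> \<Longrightarrow> Y \<in> \<Gamma> \<Longrightarrow> br X Y \<in> \<Gamma>"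
    and Phi_br: "X \<in> \<Gamma> \<Longrightarrow> Y \<in> \<Gamma> \<Longrightarrow> \<Phi> (br X Y) = br (\<Phi> X) (\<Phi> Y)"
    and hom_Jacobi: "X \<in> \<Gamma> \<Longrightarrow> Y \<in> \<Gamma> \<Longrightarrow> Z \<in> \<Gamma> \<Longrightarrow>
      sadd (sadd (br (\<Phi> X) (br Y Z)) (br (\<Phi> Y) (br Z X))) (br (\<Phi> Z) (br X Y)) = szero"
    and anchor_derivation: "X \<in> \<Gamma> \<Longrightarrow> phi_derivation C \<phi> (a X)"
    and pb_anchor: "X \<in> \<Gamma> \<Longrightarrow> f \<in> C \<Longrightarrow> pb \<phi> (a X f) = a (\<Phi> X) (pb \<phi> f)"
    and anchor_br: "X \<in> \<Gamma> \<Longrightarrow> Y \<in> \<Gamma> \<Longrightarrow> f \<in> C \<Longrightarrow>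
      a (br X Y) (pb \<phi> f) = (\<lambda>x. a (\<Phi> X) (a Y f) x - a (\<Phi> Y) (a X f) x)"
  using algebroid unfolding hom_Lie_algebroid_def by meson+

lemma anchor_add: "X \<in> \<Gamma> \<Longrightarrow> f \<in> C \<Longrightarrow> h \<in> C \<Longrightarrow> a X (\<lambda>x. f x + h x) = (\<lambda>x. a X f x + a X h x)"
  using anchor_derivation unfolding phi_derivation_def by blast

lemma
  shows bilinear_g: "bilinear (g x)"
    and g_sym_fib: "\<forall>x. \<forall>u\<in>fib \<Gamma> x. \<forall>w\<in>fib \<Gamma> x. g x u w = g x w u"
    and g_nondeg_fib: "\<forall>x. \<forall>u\<in>fib \<Gamma> x. (\<forall>w\<in>fib \<Gamma> x. g x u w = 0) \<longrightarrow> u = 0"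
    and ipr_in_C: "X \<in> \<Gamma> \<Longrightarrow> Y \<in> \<Gamma> \<Longrightarrow> ipr g X Y \<in> C"
    and ipr_Phi: "X \<in> \<Gamma> \<Longrightarrow> Y \<in> \<Gamma> \<Longrightarrow> ipr g (\<Phi> X) (\<Phi> Y) = pb \<phi> (ipr g X Y)"
  using metric unfolding pseudo_metric_def by meson+

lemma
  shows nab_in: "X \<in> \<Gamma> \<Longrightarrow> Y \<in> \<Gamma> \<Longrightarrow> nab X Y \<in> \<Gamma>"
    and nab_sadd_right: "X \<in> \<Gamma> \<Longrightarrow> Y \<in> \<Gamma> \<Longrightarrow> Z \<in> \<Gamma> \<Longrightarrow> nab Z (sadd X Y) = sadd (nab Z X) (nab Z Y)"
    and nab_const_right: "X \<in> \<Gamma> \<Longrightarrow> Y \<in> \<Gamma> \<Longrightarrow> nab X (ssm (\<lambda>_. c) Y) = ssm (\<lambda>_. c) (nab X Y)"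
    and nab_ssm_left: "f \<in> C \<Longrightarrow> X \<in> \<Gamma> \<Longrightarrow> Y \<in> \<Gamma> \<Longrightarrow> nab (ssm f X) Y = ssm (pb \<phi> f) (nab X Y)"
    and nab_Leibniz: "f \<in> C \<Longrightarrow> X \<in> \<Gamma> \<Longrightarrow> Y \<in> \<Gamma> \<Longrightarrow>
      nab X (ssm f Y) = sadd (ssm (pb \<phi> f) (nab X Y)) (ssm (a (\<Phi> X) f) (\<Phi> Y))"
    and torsion_free: "X \<in> \<Gamma> \<Longrightarrow> Y \<in> \<Gamma> \<Longrightarrow> br X Y = sadd (nab X Y) (sneg (nab Y X))"
    and metric_compatible: "X \<in> \<Gamma> \<Longrightarrow> Y \<in> \<Gamma> \<Longrightarrow> Z \<in> \<Gamma> \<Longrightarrow>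
      a (\<Phi> X) (ipr g Y Z) = (\<lambda>x. ipr g (nab X Y) (\<Phi> Z) x + ipr g (\<Phi> Y) (nab X Z) x)"
  using connection unfolding hom_LC_connection_def by meson+

lemma sneg_eq_ssm: "sneg X = ssm (\<lambda>_. -1) X"
  by (auto simp: sneg_def ssm_def)

lemma sneg_in: "X \<in> \<Gamma> \<Longrightarrow> sneg X \<in> \<Gamma>"
  by (simp add: sneg_eq_ssm ssm_in const_in_C)

lemma Phi_in: "X \<in> \<Gamma> \<Longrightarrow> \<Phi> X \<in> \<Gamma>"
  using Phi_bij bij_betwE by blast

lemma Phi_inj: "X \<in> \<Gamma> \<Longrightarrow> Y \<in> \<Gamma> \<Longrightarrow> \<Phi> X = \<Phi> Y \<Longrightarrow> X = Y"
  using Phi_bij by (metis bij_betw_def inj_onD)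

lemma Phi_surj: "Y \<in> \<Gamma> \<Longrightarrow> \<exists>X\<in>\<Gamma>. Y = \<Phi> X"
  using Phi_bij by (metis bij_betw_def imageE)

lemma Phi_ssm_const: "X \<in> \<Gamma> \<Longrightarrow> \<Phi> (ssm (\<lambda>_. s) X) = ssm (\<lambda>_. s) (\<Phi> X)"
  by (simp add: Phi_ssm const_in_C) (simp add: pb_def comp_def)

lemma g_sym: "X \<in> \<Gamma> \<Longrightarrow> Y \<in> \<Gamma> \<Longrightarrow> g x (X x) (Y x) = g x (Y x) (X x)"
  using g_sym_fib unfolding fib_def by blast

lemma section_eq_zeroI:
  assumes "S \<in> \<Gamma>" and "\<And>V. V \<in> \<Gamma> \<Longrightarrow> g x (S x) (V x) = 0"
  shows "S x = 0"
  using assms g_nondeg_fib unfolding fib_def by blast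

lemmas g_linear = bilinear_ladd[OF bilinear_g] bilinear_radd[OF bilinear_g]
  bilinear_lsub[OF bilinear_g] bilinear_rsub[OF bilinear_g]
  bilinear_lmul[OF bilinear_g] bilinear_rmul[OF bilinear_g]
  bilinear_lneg[OF bilinear_g] bilinear_rneg[OF bilinear_g]

lemma torsion_free_at: "X \<in> \<Gamma> \<Longrightarrow> Y \<in> \<Gamma> \<Longrightarrow> br X Y x = nab X Y x - nab Y X x"
  using torsion_free by (simp add: sadd_def sneg_def)

lemma metric_compatible_at: "X \<in> \<Gamma> \<Longrightarrow> Y \<in> \<Gamma> \<Longrightarrow> Z \<in> \<Gamma> \<Longrightarrow>
    a (\<Phi> X) (ipr g Y Z) x = g x (nab X Y x) (\<Phi> Z x) + g x (\<Phi> Y x) (nab X Z x)"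
  using metric_compatible by (simp add: ipr_def)

lemma Koszul_formula:
  assumes X: "X \<in> \<Gamma>" and Y: "Y \<in> \<Gamma>" and Z: "Z \<in> \<Gamma>"
  shows "2 * g x (nab X Y x) (\<Phi> Z x) = a (\<Phi> X) (ipr g Y Z) x + a (\<Phi> Y) (ipr g Z X) x
     - a (\<Phi> Z) (ipr g X Y) x + g x (br X Y x) (\<Phi> Z x) - g x (\<Phi> Y x) (br X Z x)
     - g x (\<Phi> X x) (br Y Z x)"
proof -
  have "g x (nab U W x) (\<Phi> V x) = g x (\<Phi> V x) (nab U W x)" if "U \<in> \<Gamma>" "V \<in> \<Gamma>" "W \<in> \<Gamma>" for U V W
    using that by (simp add: g_sym nab_in Phi_in)
  with X Y Z show ?thesis
    by (simp add: metric_compatible_at torsion_free_at g_linear)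
qed


lemma nab_Phi:
  assumes X: "X \<in> \<Gamma>" and Y: "Y \<in> \<Gamma>"
  shows "nab (\<Phi> X) (\<Phi> Y) = \<Phi> (nab X Y)"
proof
  fix x
  have anchor_Phi: "a (\<Phi> (\<Phi> U)) (ipr g (\<Phi> V) (\<Phi> W)) x = a (\<Phi> U) (ipr g V W) (\<phi> x)"
    if "U \<in> \<Gamma>" "V \<in> \<Gamma>" "W \<in> \<Gamma>" for U V W
    using that by (simp add: ipr_Phi pb_anchor[symmetric] Phi_in ipr_in_C) (simp add: pb_def)
  have g_Phi: "g x (\<Phi> U x) (\<Phi> V x) = g (\<phi> x) (U (\<phi> x)) (V (\<phi> x))" if "U \<in> \<Gamma>" "V \<in> \<Gamma>" for U V
    using fun_cong[OF ipr_Phi[OF that], of x] by (simp add: ipr_def pb_def)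
  have pairing: "g x (nab (\<Phi> X) (\<Phi> Y) x - \<Phi> (nab X Y) x) (\<Phi> (\<Phi> Z) x) = 0" if Z: "Z \<in> \<Gamma>" for Z
  proof -
    have "2 * g x (nab (\<Phi> X) (\<Phi> Y) x) (\<Phi> (\<Phi> Z) x) = 2 * g (\<phi> x) (nab X Y (\<phi> x)) (\<Phi> Z (\<phi> x))"
      unfolding Koszul_formula[OF Phi_in[OF X] Phi_in[OF Y] Phi_in[OF Z]] Koszul_formula[OF X Y Z]
      using X Y Z by (simp add: anchor_Phi Phi_br[symmetric] g_Phi br_in Phi_in)
    then show ?thesis
      using X Y Z by (simp add: g_linear g_Phi nab_in Phi_in)
  qed
  have "sadd (nab (\<Phi> X) (\<Phi> Y)) (sneg (\<Phi> (nab X Y))) x = 0"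
  proof (rule section_eq_zeroI)
    show "sadd (nab (\<Phi> X) (\<Phi> Y)) (sneg (\<Phi> (nab X Y))) \<in> \<Gamma>"
      using X Y by (simp add: sadd_in sneg_in nab_in Phi_in)
  next
    fix V assume "V \<in> \<Gamma>"
    then obtain Z where "Z \<in> \<Gamma>" "V = \<Phi> (\<Phi> Z)" using Phi_surj by metis
    then show "g x (sadd (nab (\<Phi> X) (\<Phi> Y)) (sneg (\<Phi> (nab X Y))) x) (V x) = 0"
      using pairing by (simp add: sadd_def sneg_def)
  qed
  then show "nab (\<Phi> X) (\<Phi> Y) x = \<Phi> (nab X Y) x"
    by (simp add: sadd_def sneg_def)
qed

definition curvature :: "('m \<Rightarrow> 'v) \<Rightarrow> ('m \<Rightarrow> 'v) \<Rightarrow> ('m \<Rightarrow> 'v) \<Rightarrow> ('m \<Rightarrow> 'v)" where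
  "curvature X Y Z =
     sadd (sadd (nab (br X Y) (\<Phi> Z)) (sneg (nab (\<Phi> X) (nab Y Z)))) (nab (\<Phi> Y) (nab X Z))"

lemma curvature_at:
  "curvature X Y Z x = nab (br X Y) (\<Phi> Z) x - nab (\<Phi> X) (nab Y Z) x + nab (\<Phi> Y) (nab X Z) x"
  by (simp add: curvature_def sadd_def sneg_def)

lemma curvature_in: "X \<in> \<Gamma> \<Longrightarrow> Y \<in> \<Gamma> \<Longrightarrow> Z \<in> \<Gamma> \<Longrightarrow> curvature X Y Z \<in> \<Gamma>"
  by (simp add: curvature_def sadd_in sneg_in nab_in br_in Phi_in)

lemma first_Bianchi:
  assumes X: "X \<in> \<Gamma>" and Y: "Y \<in> \<Gamma>" and Z: "Z \<in> \<Gamma>"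
  shows "curvature X Y Z x + curvature Y Z X x + curvature Z X Y x = 0"
proof -
  have nab_sneg: "nab U (sneg V) = sneg (nab U V)" if "U \<in> \<Gamma>" "V \<in> \<Gamma>" for U V
    using that by (simp add: sneg_eq_ssm nab_const_right)
  have nab_br: "nab (br U V) (\<Phi> W) x
      = nab (\<Phi> W) (nab U V) x - nab (\<Phi> W) (nab V U) x - br (\<Phi> W) (br U V) x"
    if "U \<in> \<Gamma>" "V \<in> \<Gamma>" "W \<in> \<Gamma>" for U V W
  proof -
    have "nab (\<Phi> W) (br U V) x = nab (\<Phi> W) (nab U V) x - nab (\<Phi> W) (nab V U) x"
      using that by (simp add: torsion_free nab_sadd_right nab_sneg sneg_in nab_in Phi_in)
        (simp add: sadd_def sneg_def)
    with that show ?thesis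
      by (simp add: torsion_free_at[of "\<Phi> W"] br_in Phi_in)
  qed
  have "br (\<Phi> X) (br Y Z) x + br (\<Phi> Y) (br Z X) x + br (\<Phi> Z) (br X Y) x = 0"
    using fun_cong[OF hom_Jacobi[OF X Y Z], of x] by (simp add: sadd_def szero_def)
  with X Y Z show ?thesis
    by (simp add: curvature_at nab_br algebra_simps)
qed

lemma curvature_skew:
  assumes X: "X \<in> \<Gamma>" and Y: "Y \<in> \<Gamma>" and Z: "Z \<in> \<Gamma>" and W: "W \<in> \<Gamma>"
  shows "g x (curvature X Y Z x) (\<Phi> (\<Phi> W) x) + g x (\<Phi> (\<Phi> Z) x) (curvature X Y W x) = 0"
proof -
  have second_derivative: "a (\<Phi> (\<Phi> U)) (a (\<Phi> V) (ipr g Z W)) x =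
     g x (nab (\<Phi> U) (nab V Z) x) (\<Phi> (\<Phi> W) x) + g x (\<Phi> (nab V Z) x) (\<Phi> (nab U W) x)
     + g x (\<Phi> (nab U Z) x) (\<Phi> (nab V W) x) + g x (\<Phi> (\<Phi> Z) x) (nab (\<Phi> U) (nab V W) x)"
    if U: "U \<in> \<Gamma>" and V: "V \<in> \<Gamma>" for U V
  proof -
    have "a (\<Phi> (\<Phi> U)) (a (\<Phi> V) (ipr g Z W)) =
        (\<lambda>x. a (\<Phi> (\<Phi> U)) (ipr g (nab V Z) (\<Phi> W)) x + a (\<Phi> (\<Phi> U)) (ipr g (\<Phi> Z) (nab V W)) x)"
      using U V Z W by (simp add: metric_compatible anchor_add Phi_in ipr_in_C nab_in)
    then show ?thesis
      using U V Z W by (simp add: metric_compatible_at Phi_in nab_in nab_Phi)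
  qed
  have "a (\<Phi> (br X Y)) (ipr g (\<Phi> Z) (\<Phi> W)) x
      = a (\<Phi> (\<Phi> X)) (a (\<Phi> Y) (ipr g Z W)) x - a (\<Phi> (\<Phi> Y)) (a (\<Phi> X) (ipr g Z W)) x"
    using X Y Z W by (simp add: ipr_Phi Phi_br anchor_br Phi_in ipr_in_C)
  moreover have "a (\<Phi> (br X Y)) (ipr g (\<Phi> Z) (\<Phi> W)) x
      = g x (nab (br X Y) (\<Phi> Z) x) (\<Phi> (\<Phi> W) x) + g x (\<Phi> (\<Phi> Z) x) (nab (br X Y) (\<Phi> W) x)"
    using X Y Z W by (simp add: metric_compatible_at br_in Phi_in)
  ultimately show ?thesis
    using second_derivative[OF X Y] second_derivative[OF Y X] by (simp add: curvature_at g_linear)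
qed


lemma hom_representation_flat_subalgebroid:
  assumes sub: "B \<subseteq> \<Gamma>" and B_vbundle: "vbundle C B" and Phi_bij_B: "bij_betw \<Phi> B B"
    and br_closed: "\<And>X Y. X \<in> B \<Longrightarrow> Y \<in> B \<Longrightarrow> br X Y \<in> B"
    and nab_closed: "\<And>X Y. X \<in> B \<Longrightarrow> Y \<in> B \<Longrightarrow> nab X Y \<in> B"
    and flat: "\<And>X Y Z. X \<in> B \<Longrightarrow> Y \<in> B \<Longrightarrow> Z \<in> B \<Longrightarrow> curvature X Y Z = szero"
  shows "hom_representation C \<phi> B \<Phi> br a B \<Phi> \<Phi> nab"
proof -
  have "nab (br X Y) (\<Phi> Z) = sadd (nab (\<Phi> X) (nab Y Z)) (sneg (nab (\<Phi> Y) (nab X Z)))"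
    if "X \<in> B" "Y \<in> B" "Z \<in> B" for X Y Z
  proof
    fix x
    have "curvature X Y Z x = 0"
      using flat[OF that] by (simp add: szero_def)
    then show "nab (br X Y) (\<Phi> Z) x = sadd (nab (\<Phi> X) (nab Y Z)) (sneg (nab (\<Phi> Y) (nab X Z))) x"
      by (simp add: curvature_at sadd_def sneg_def algebra_simps)
  qed
  moreover have "hom_Lie_algebroid C \<phi> B \<Phi> br a"
    using algebroid sub B_vbundle Phi_bij_B br_closed by (rule hom_Lie_algebroid_subalgebroid)
  moreover have "hom_bundle C \<phi> B \<Phi>"
    using hom_bundle sub B_vbundle Phi_bij_B by (rule hom_bundle_subbundle)
  ultimately show ?thesis
    unfolding hom_representation_def using sub Phi_bij_B nab_closed
    by (simp add: subset_iff Phi_sadd Phi_ssm nab_sadd_right nab_const_right nab_ssm_left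
        nab_Leibniz nab_Phi)
qed

end

locale para_Kaehler_algebroid = hom_Levi_Civita C \<phi> \<Gamma> \<Phi> br a g nab
    for C \<phi> and \<Gamma> :: "('m \<Rightarrow> 'v::euclidean_space) set" and \<Phi> br a g nab +
  fixes K :: "('m \<Rightarrow> 'v) \<Rightarrow> ('m \<Rightarrow> 'v)"
  assumes para_complex: "almost_para_complex C \<Gamma> \<Phi> K"
    and K_anti_isometric: "\<And>X Y. X \<in> \<Gamma> \<Longrightarrow> Y \<in> \<Gamma> \<Longrightarrow> ipr g (\<Phi> (K X)) (\<Phi> (K Y)) = (\<lambda>x. - ipr g X Y x)"
    and nab_K: "\<And>X Y. X \<in> \<Gamma> \<Longrightarrow> Y \<in> \<Gamma> \<Longrightarrow> nab X (\<Phi> (K Y)) = \<Phi> (K (nab X Y))"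
begin

lemma
  shows K_bij: "bij_betw K \<Gamma> \<Gamma>"
    and PhiK_involution: "X \<in> \<Gamma> \<Longrightarrow> \<Phi> (K (\<Phi> (K X))) = X"
    and Phi_K_commute: "X \<in> \<Gamma> \<Longrightarrow> \<Phi> (K X) = K (\<Phi> X)"
    and PhiK_sadd: "X \<in> \<Gamma> \<Longrightarrow> Y \<in> \<Gamma> \<Longrightarrow> \<Phi> (K (sadd X Y)) = sadd (\<Phi> (K X)) (\<Phi> (K Y))"
    and PhiK_ssm: "f \<in> C \<Longrightarrow> X \<in> \<Gamma> \<Longrightarrow> \<Phi> (K (ssm f X)) = ssm f (\<Phi> (K X))"
  using para_complex unfolding almost_para_complex_def by meson+

lemma PhiK_in: "X \<in> \<Gamma> \<Longrightarrow> \<Phi> (K X) \<in> \<Gamma>"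
  using K_bij bij_betwE Phi_in by metis

text \<open>\<open>Eig 1\<close> and \<open>Eig (-1)\<close> are \<open>A\<^sup>1\<close> and \<open>A\<^sup>-\<^sup>1\<close>; both are treated at once for \<open>s * s = 1\<close>.\<close>

definition Eig :: "real \<Rightarrow> ('m \<Rightarrow> 'v) set" where
  "Eig s = {X \<in> \<Gamma>. \<Phi> (K X) = ssm (\<lambda>_. s) X}"

lemma Eig_subset: "Eig s \<subseteq> \<Gamma>"
  by (auto simp: Eig_def)

lemma Eig_PhiK: "X \<in> Eig s \<Longrightarrow> \<Phi> (K X) = ssm (\<lambda>_. s) X"
  by (simp add: Eig_def)

lemma Eig_sadd: "X \<in> Eig s \<Longrightarrow> Y \<in> Eig s \<Longrightarrow> sadd X Y \<in> Eig s"
  by (auto simp: Eig_def PhiK_sadd sadd_in) (auto simp: sadd_def ssm_def algebra_simps)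

lemma Eig_ssm: "f \<in> C \<Longrightarrow> X \<in> Eig s \<Longrightarrow> ssm f X \<in> Eig s"
  by (auto simp: Eig_def PhiK_ssm ssm_in) (auto simp: ssm_def)

lemma Eig_sneg: "X \<in> Eig s \<Longrightarrow> sneg X \<in> Eig s"
  by (simp add: sneg_eq_ssm Eig_ssm const_in_C)

lemma Eig_vbundle: "vbundle C (Eig s)"
proof -
  have "szero = ssm (\<lambda>_. 0) (szero :: 'm \<Rightarrow> 'v)"
    by (simp add: ssm_def szero_def)
  moreover have "\<Phi> (K (ssm (\<lambda>_. 0) szero)) = ssm (\<lambda>_. s) (ssm (\<lambda>_. 0) szero)"
    by (simp add: PhiK_ssm const_in_C szero_in) (simp add: ssm_def)
  ultimately have "szero \<in> Eig s"
    by (simp add: Eig_def szero_in)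
  then show ?thesis
    unfolding vbundle_def using Eig_sadd Eig_ssm by blast
qed

lemma Phi_in_Eig_iff:
  assumes X: "X \<in> \<Gamma>"
  shows "\<Phi> X \<in> Eig s \<longleftrightarrow> X \<in> Eig s"
proof -
  have "\<Phi> (K (\<Phi> X)) = \<Phi> (\<Phi> (K X))"
    using X Phi_K_commute by metis
  then have "\<Phi> (K (\<Phi> X)) = ssm (\<lambda>_. s) (\<Phi> X) \<longleftrightarrow> \<Phi> (K X) = ssm (\<lambda>_. s) X"
    using X by (metis Phi_inj Phi_ssm_const PhiK_in ssm_in const_in_C)
  with X show ?thesis
    by (simp add: Eig_def Phi_in)
qed

lemma Eig_Phi_bij: "bij_betw \<Phi> (Eig s) (Eig s)"
proof -
  have "Eig s \<subseteq> \<Phi> ` Eig s"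
  proof
    fix Y assume "Y \<in> Eig s"
    moreover obtain X where "X \<in> \<Gamma>" "Y = \<Phi> X"
      using \<open>Y \<in> Eig s\<close> Eig_subset Phi_surj by blast
    ultimately show "Y \<in> \<Phi> ` Eig s"
      using Phi_in_Eig_iff by blast
  qed
  moreover have "\<Phi> ` Eig s \<subseteq> Eig s"
    using Eig_subset Phi_in_Eig_iff by blast
  moreover have "inj_on \<Phi> (Eig s)"
    using Eig_subset Phi_inj by (meson inj_onI subsetD)
  ultimately show ?thesis
    by (simp add: bij_betw_def)
qed

lemma Eig_Phi_surj: "Y \<in> Eig s \<Longrightarrow> \<exists>X\<in>Eig s. Y = \<Phi> X"
  using Eig_Phi_bij by (metis bij_betw_def imageE)

lemma nab_Eig: "X \<in> \<Gamma> \<Longrightarrow> Y \<in> Eig s \<Longrightarrow> nab X Y \<in> Eig s"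
  by (auto simp: Eig_def nab_K[symmetric] nab_const_right nab_in)

lemma br_Eig: "X \<in> Eig s \<Longrightarrow> Y \<in> Eig s \<Longrightarrow> br X Y \<in> Eig s"
  using Eig_subset[of s] by (simp add: subset_iff torsion_free Eig_sadd Eig_sneg nab_Eig)

lemma curvature_Eig: "X \<in> \<Gamma> \<Longrightarrow> Y \<in> \<Gamma> \<Longrightarrow> Z \<in> Eig s \<Longrightarrow> curvature X Y Z \<in> Eig s"
  by (simp add: curvature_def Eig_sadd Eig_sneg nab_Eig br_in Phi_in Phi_in_Eig_iff Eig_subset[THEN subsetD])

lemma Eig_isotropic:
  assumes s: "s * s = 1" and X: "X \<in> Eig s" and Y: "Y \<in> Eig s"
  shows "g x (X x) (Y x) = 0"
proof -
  have "g x (s *\<^sub>R X x) (s *\<^sub>R Y x) = - g x (X x) (Y x)"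
    using fun_cong[OF K_anti_isometric, of X Y x] X Y Eig_subset
    by (auto simp: Eig_PhiK ipr_def ssm_def)
  then have "(s * s) * g x (X x) (Y x) = - g x (X x) (Y x)"
    by (simp add: g_linear)
  with s show ?thesis
    by simp
qed

lemma Eig_projection:
  assumes s: "s * s = 1" and V: "V \<in> \<Gamma>"
  shows "sadd V (ssm (\<lambda>_. s) (\<Phi> (K V))) \<in> Eig s"
proof -
  have "\<Phi> (K (sadd V (ssm (\<lambda>_. s) (\<Phi> (K V))))) = sadd (\<Phi> (K V)) (ssm (\<lambda>_. s) V)"
    using V by (simp add: PhiK_sadd PhiK_ssm ssm_in PhiK_in const_in_C PhiK_involution)
  also have "\<dots> = ssm (\<lambda>_. s) (sadd V (ssm (\<lambda>_. s) (\<Phi> (K V))))"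
    using s by (simp add: sadd_def ssm_def algebra_simps)
  finally show ?thesis
    using V by (simp add: Eig_def sadd_in ssm_in PhiK_in const_in_C)
qed

lemma curvature_Eig_orthogonal_opposite:
  assumes s: "s * s = 1" and X: "X \<in> Eig s" and Y: "Y \<in> Eig s" and Z: "Z \<in> Eig s"
    and W: "W \<in> Eig (-s)"
  shows "g x (curvature X Y Z x) (\<Phi> (\<Phi> W) x) = 0"
proof -
  have XYZW: "X \<in> \<Gamma>" "Y \<in> \<Gamma>" "Z \<in> \<Gamma>" "W \<in> \<Gamma>"
    using X Y Z W Eig_subset by auto
  have ZZ: "\<Phi> (\<Phi> Z) \<in> Eig s"
    using Z XYZW by (simp add: Phi_in_Eig_iff Phi_in)
  have "g x (curvature X Y Z x) (\<Phi> (\<Phi> W) x) = - g x (\<Phi> (\<Phi> Z) x) (curvature X Y W x)"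
    using curvature_skew[OF XYZW, of x] by simp
  also have "curvature X Y W x = - curvature Y W X x - curvature W X Y x"
    using first_Bianchi[OF XYZW(1,2,4), of x] by (simp add: algebra_simps eq_neg_iff_add_eq_0)
  also have "g x (\<Phi> (\<Phi> Z) x) (- curvature Y W X x - curvature W X Y x) = 0"
    using Eig_isotropic[OF s ZZ curvature_Eig[OF XYZW(2,4) X]]
      Eig_isotropic[OF s ZZ curvature_Eig[OF XYZW(4,1) Y]]
    by (simp add: g_linear)
  finally show ?thesis
    by simp
qed

lemma curvature_Eig_eq_szero:
  assumes s: "s * s = 1" and X: "X \<in> Eig s" and Y: "Y \<in> Eig s" and Z: "Z \<in> Eig s"
  shows "curvature X Y Z = szero"
proof
  fix x
  have XYZ: "X \<in> \<Gamma>" "Y \<in> \<Gamma>" "Z \<in> \<Gamma>"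
    using X Y Z Eig_subset by auto
  have "curvature X Y Z x = 0"
  proof (rule section_eq_zeroI)
    show "curvature X Y Z \<in> \<Gamma>"
      using XYZ by (rule curvature_in)
  next
    fix V assume V: "V \<in> \<Gamma>"
    define P where "P = sadd V (ssm (\<lambda>_. s) (\<Phi> (K V)))"
    define Q where "Q = sadd V (ssm (\<lambda>_. -s) (\<Phi> (K V)))"
    have "P \<in> Eig s"
      unfolding P_def by (rule Eig_projection[OF s V])
    have "Q \<in> Eig (-s)"
      unfolding Q_def using s by (intro Eig_projection V) simp
    then obtain W where "W \<in> Eig (-s)" "Q = \<Phi> (\<Phi> W)"
      using Eig_Phi_surj by metis
    have "V x = (1/2) *\<^sub>R (P x + Q x)"
      by (simp add: P_def Q_def sadd_def ssm_def scaleR_2[symmetric] del: scaleR_2)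
    moreover have "g x (curvature X Y Z x) (P x) = 0"
      using s curvature_Eig[OF XYZ(1,2) Z] \<open>P \<in> Eig s\<close> by (rule Eig_isotropic)
    moreover have "g x (curvature X Y Z x) (Q x) = 0"
      using curvature_Eig_orthogonal_opposite[OF s X Y Z \<open>W \<in> Eig (-s)\<close>] \<open>Q = \<Phi> (\<Phi> W)\<close>
      by simp
    ultimately show "g x (curvature X Y Z x) (V x) = 0"
      by (simp add: g_linear)
  qed
  then show "curvature X Y Z x = szero x"
    by (simp add: szero_def)
qed

lemma Eig_representation:
  assumes "s * s = 1"
  shows "hom_representation C \<phi> (Eig s) \<Phi> br a (Eig s) \<Phi> \<Phi> nab"
  using Eig_subset Eig_vbundle Eig_Phi_bij br_Eig
proof (rule hom_representation_flat_subalgebroid)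
  show "nab X Y \<in> Eig s" if "X \<in> Eig s" "Y \<in> Eig s" for X Y
    using that Eig_subset nab_Eig by blast
  show "curvature X Y Z = szero" if "X \<in> Eig s" "Y \<in> Eig s" "Z \<in> Eig s" for X Y Z
    using assms that by (rule curvature_Eig_eq_szero)
qed

end

lemma para_Kaehler_algebroidI:
  assumes "para_Kaehler C \<phi> \<Gamma> \<Phi> br a K g nab"
  shows "para_Kaehler_algebroid C \<phi> \<Gamma> \<Phi> br a g nab K"
  using assms unfolding para_Kaehler_def para_Kaehler_algebroid_def para_Kaehler_algebroid_axioms_def
    hom_Levi_Civita_def by blast

theorem mainTheorem8:
  fixes C :: "('m \<Rightarrow> real) set" and \<phi> :: "'m \<Rightarrow> 'm"
    and \<Gamma> :: "('m \<Rightarrow> 'v::euclidean_space) set"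
    and \<Phi> :: "('m \<Rightarrow> 'v) \<Rightarrow> ('m \<Rightarrow> 'v)"
    and br :: "('m \<Rightarrow> 'v) \<Rightarrow> ('m \<Rightarrow> 'v) \<Rightarrow> ('m \<Rightarrow> 'v)"
    and a :: "('m \<Rightarrow> 'v) \<Rightarrow> ('m \<Rightarrow> real) \<Rightarrow> ('m \<Rightarrow> real)"
    and K :: "('m \<Rightarrow> 'v) \<Rightarrow> ('m \<Rightarrow> 'v)"
    and g :: "'m \<Rightarrow> 'v \<Rightarrow> 'v \<Rightarrow> real"
    and nab :: "('m \<Rightarrow> 'v) \<Rightarrow> ('m \<Rightarrow> 'v) \<Rightarrow> ('m \<Rightarrow> 'v)"
  assumes "para_Kaehler C \<phi> \<Gamma> \<Phi> br a K g nab"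
  shows "hom_representation C \<phi> (eig_plus \<Gamma> \<Phi> K) \<Phi> br a (eig_plus \<Gamma> \<Phi> K) \<Phi> \<Phi> nab \<and>
     hom_representation C \<phi> (eig_minus \<Gamma> \<Phi> K) \<Phi> br a (eig_minus \<Gamma> \<Phi> K) \<Phi> \<Phi> nab"
proof -
  interpret para_Kaehler_algebroid C \<phi> \<Gamma> \<Phi> br a g nab K
    using assms by (rule para_Kaehler_algebroidI)
  have "eig_plus \<Gamma> \<Phi> K = Eig 1"
    unfolding eig_plus_def Eig_def by (auto simp: ssm_def)
  moreover have "eig_minus \<Gamma> \<Phi> K = Eig (-1)"
    unfolding eig_minus_def Eig_def by (auto simp: ssm_def sneg_def)
  ultimately show ?thesis
    using Eig_representation[of 1] Eig_representation[of "-1"] by simp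
qed

end
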